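(* Let $k\ge1$, $m_1,\dots,m_k\ge1$ integers with at least one $m_i\neq1$, and $\varepsilon_1,\dots,\varepsilon_k\in\{-1,1\}$. Then $\mathcal S(\underbrace{0,\dots,0}_{m_1-1},\varepsilon_1,\underbrace{0,\dots,0}_{m_2-1},\varepsilon_2,\dots,\underbrace{0,\dots,0}_{m_k-1},\varepsilon_k,1)=0.$
   Context: Let $V=\mathbb Q^\times\otimes_{\mathbb Z}\mathbb Q$ (torsion, in particular $-1$, becomes $0$); for $f\in\mathbb Q^\times$ write $f$ for its image in $V$. Tensors in $V^{\otimes n}$ are multilinear in the multiplicative sense, and any formal tensor having the number $0$ as a factor is interpreted as $0$. Define $\mu(x,y)=1-y/x$ if $x\ne0$, $\mu(0,y)=y$. For a tuple $(a_1,\dots,a_m)$, $m\ge2$ (the decorated polygon $P(a_1,\dots,a_m)$ with root decoration $a_m$, attached to $G(a_{m-1},\dots,a_1;a_m)$), define $\mathcal S(a_1,\dots,a_m)\in V^{\otimes(m-1)}$ by $\mathcal S(a_1,a_2)=\mu(a_1,a_2)$ and, for $m\ge3$, $\mathcal S(a_1,\dots,a_m)=\sum_{i=1}^{m-1}\mathcal S(a_1,\dots,\widehat{a_i},\dots,a_m)\otimes\mu(a_i,a_{i+1})-\sum_{i=2}^{m-1}\mathcal S(a_1,\dots,\widehat{a_i},\dots,a_m)\otimes\mu(a_i,a_{i-1})$. *)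

theory Defs
  imports "HOL-Computational_Algebra.Computational_Algebra"
begin

definition mu :: "rat \<Rightarrow> rat \<Rightarrow> rat" where
  "mu x y = (if x = 0 then y else 1 - y / x)"

definition del_nth :: "nat \<Rightarrow> 'a list \<Rightarrow> 'a list" where
  "del_nth i xs = take i xs @ drop (Suc i) xs"

text \<open>Formal tensors: S(a_1,...,a_m) as a formal integer linear combination of formal
  tensors f_1 (x) ... (x) f_(m-1), each given as a list of rationals.\<close>
function Sf :: "rat list \<Rightarrow> (int \<times> rat list) list" where
  "Sf as =
    (if length as < 2 then []
     else if length as = 2 then [(1, [mu (as ! 0) (as ! 1)])]
     else concat (map (\<lambda>i. map (\<lambda>(c, fs). (c, fs @ [mu (as ! i) (as ! (i + 1))]))
                                 (Sf (del_nth i as)))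
                      [0..<length as - 1])
        @ concat (map (\<lambda>i. map (\<lambda>(c, fs). (- c, fs @ [mu (as ! i) (as ! (i - 1))]))
                                 (Sf (del_nth i as)))
                      [1..<length as - 1]))"
  by pat_completeness auto
termination
  by (relation "measure length") (auto simp: del_nth_def)

text \<open>Concrete model of V = Q^* (x)_Z Q: the image of f in V is determined by its
  p-adic valuations (torsion, i.e. signs, is killed), and V has Q-basis indexed by primes.
  Hence V^(x)n is identified with finitely supported functions on n-tuples of primes.\<close>
definition qval :: "nat \<Rightarrow> rat \<Rightarrow> int" where
  "qval p x = (case quotient_of x of (a, b) \<Rightarrow>
                 int (multiplicity (int p) a) - int (multiplicity (int p) b))"

text \<open>Coordinate of the formal tensor f_1 (x) ... (x) f_n at the basis element
  e_(p_1) (x) ... (x) e_(p_n); a formal tensor with a factor 0 is 0.\<close>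
definition etens :: "rat list \<Rightarrow> nat list \<Rightarrow> rat" where
  "etens fs ps = (if length ps = length fs \<and> (\<forall>p\<in>set ps. prime p) \<and> (\<forall>f\<in>set fs. f \<noteq> 0)
                  then prod_list (map2 (\<lambda>p f. of_int (qval p f)) ps fs) else 0)"

definition tval :: "(int \<times> rat list) list \<Rightarrow> nat list \<Rightarrow> rat" where
  "tval ts ps = sum_list (map (\<lambda>(c, fs). of_int c * etens fs ps) ts)"

end

theory Submission
  imports Defs
begin

text \<open>If all entries of \<open>(a\<^sub>1,\<dots>,a\<^sub>m)\<close> lie in \<open>{0, 1, -1}\<close> and one of them is \<open>0\<close>,
  then every formal tensor in \<open>S(a\<^sub>1,\<dots>,a\<^sub>m)\<close> has a factor in \<open>{0, 1, -1}\<close>, and such a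
  tensor vanishes in \<open>V\<^sup>\<otimes>\<^sup>n\<close> because \<open>-1\<close> is torsion. Along the recursion, deleting an
  entry \<open>a\<^sub>i \<noteq> 0\<close> keeps a \<open>0\<close> in the shorter tuple, while deleting \<open>a\<^sub>i = 0\<close> appends the
  factor \<open>\<mu>(0, y) = y\<close> with \<open>y\<close> a neighbouring entry; for \<open>m = 2\<close> also \<open>\<mu>(x, 0) \<in> {0, 1}\<close>.\<close>

declare Sf.simps [simp del]

lemma qval_one [simp]: "qval p 1 = 0"
  by (simp add: qval_def)

lemma qval_neg_one [simp]: "qval p (-1) = 0"
  by (simp add: qval_def multiplicity_unit_right)

lemma etens_eq_0_if_trivial_factor:
  assumes "f \<in> set fs" "f \<in> {0, 1, -1}"
  shows "etens fs ps = 0"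
proof (cases "length ps = length fs \<and> (\<forall>p\<in>set ps. prime p) \<and> (\<forall>f\<in>set fs. f \<noteq> 0)")
  case True
  obtain j where j: "j < length fs" "fs ! j = f"
    using assms(1) by (auto simp: in_set_conv_nth)
  have "f \<noteq> 0" using True assms(1) by blast
  with assms(2) j(2) have "qval (ps ! j) (fs ! j) = 0" by auto
  moreover have "(ps ! j, fs ! j) \<in> set (zip ps fs)"
    using j(1) True by (auto simp: set_zip)
  ultimately have "0 \<in> set (map2 (\<lambda>p f. of_int (qval p f) :: rat) ps fs)"
    by force
  then show ?thesis
    using True by (simp add: etens_def prod_list_zero_iff)
next
  case False
  then show ?thesis
    unfolding etens_def by (rule if_not_P)
qed

lemma tval_eq_0_if_trivial_factors:
  assumes "\<And>c fs. (c, fs) \<in> set ts \<Longrightarrow> \<exists>f\<in>set fs. f \<in> {0, 1, -1}"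
  shows "tval ts = (\<lambda>_. 0)"
proof
  fix ps
  have "\<forall>(c, fs)\<in>set ts. of_int c * etens fs ps = 0"
    using assms etens_eq_0_if_trivial_factor by fastforce
  then show "tval ts ps = 0"
    unfolding tval_def by (induction ts) auto
qed

lemma mu_zero_left [simp]: "mu 0 y = y"
  by (simp add: mu_def)

lemma mu_zero_right: "mu x 0 \<in> {0, 1}"
  by (simp add: mu_def)

lemma set_del_nth_subset: "set (del_nth i xs) \<subseteq> set xs"
  unfolding del_nth_def using set_take_subset set_drop_subset by fastforce

lemma in_set_del_nth:
  assumes "x \<in> set xs" "xs ! i \<noteq> x" "i < length xs"
  shows "x \<in> set (del_nth i xs)"
proof -
  have "xs = take i xs @ xs ! i # drop (Suc i) xs"
    using assms(3) by (simp add: id_take_nth_drop)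
  then have "set xs = set (take i xs) \<union> {xs ! i} \<union> set (drop (Suc i) xs)"
    by (metis Un_insert_right insert_is_Un set_append set_simps(2) sup_commute)
  then show ?thesis
    using assms by (auto simp: del_nth_def)
qed

lemma Sf_length_two: "Sf [a, b] = [(1, [mu a b])]"
  by (subst Sf.simps) simp

lemma in_set_Sf_long:
  assumes "(c, fs) \<in> set (Sf as)" "length as > 2"
  obtains i j c' fs' where "i < length as - 1" "j < length as"
    "(c', fs') \<in> set (Sf (del_nth i as))" "fs = fs' @ [mu (as ! i) (as ! j)]"
proof -
  from assms have "(c, fs) \<in> set (concat (map (\<lambda>i. map (\<lambda>(c, fs). (c, fs @ [mu (as ! i) (as ! (i + 1))]))
                                 (Sf (del_nth i as))) [0..<length as - 1])
        @ concat (map (\<lambda>i. map (\<lambda>(c, fs). (- c, fs @ [mu (as ! i) (as ! (i - 1))]))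
                                 (Sf (del_nth i as))) [1..<length as - 1]))"
    by (subst (asm) Sf.simps) simp
  then consider (succ) i where "i < length as - 1"
      "(c, fs) \<in> set (map (\<lambda>(c, fs). (c, fs @ [mu (as ! i) (as ! (i + 1))])) (Sf (del_nth i as)))"
    | (pred) i where "1 \<le> i" "i < length as - 1"
      "(c, fs) \<in> set (map (\<lambda>(c, fs). (- c, fs @ [mu (as ! i) (as ! (i - 1))])) (Sf (del_nth i as)))"
    unfolding set_append set_concat set_map by fastforce
  then show ?thesis
  proof cases
    case succ
    then show ?thesis
      using that[of i "i + 1"] by auto
  next
    case pred
    then show ?thesis
      using that[of i "i - 1"] by auto
  qed
qed

lemma Sf_has_trivial_factor:
  "set as \<subseteq> {0, 1, -1} \<Longrightarrow> 0 \<in> set as \<Longrightarrow> (c, fs) \<in> set (Sf as) \<Longrightarrow>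
    \<exists>f\<in>set fs. f \<in> {0, 1, -1}"
proof (induction as arbitrary: c fs rule: Sf.induct)
  case (1 as)
  consider "length as < 2" | "length as = 2" | "length as > 2"
    by linarith
  then show ?case
  proof cases
    case 1
    with "1.prems"(3) show ?thesis
      by (subst (asm) Sf.simps) simp
  next
    case 2
    then obtain a b where "as = [a, b]"
      by (metis length_0_conv length_Suc_conv numeral_2_eq_2)
    with "1.prems" show ?thesis
      using mu_zero_right[of a] by (auto simp: Sf_length_two)
  next
    case long: 3
    obtain i j c' fs' where ij: "i < length as - 1" "j < length as"
      and sub: "(c', fs') \<in> set (Sf (del_nth i as))" and fs: "fs = fs' @ [mu (as ! i) (as ! j)]"
      using in_set_Sf_long[OF "1.prems"(3) long] .
    show ?thesis
    proof (cases "as ! i = 0")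
      case True
      have "as ! j \<in> {0, 1, -1}"
        using ij(2) "1.prems"(1) nth_mem by blast
      with True fs show ?thesis by simp
    next
      case False
      have "\<not> length as < 2" "length as \<noteq> 2" "i \<in> set [0..<length as - 1]"
        using long ij(1) by simp_all
      moreover have "set (del_nth i as) \<subseteq> {0, 1, -1}"
        by (rule order_trans[OF set_del_nth_subset "1.prems"(1)])
      moreover have "0 \<in> set (del_nth i as)"
        using in_set_del_nth[OF "1.prems"(2) False] ij(1) by simp
      ultimately have "\<exists>f\<in>set fs'. f \<in> {0, 1, -1}"
        using "1.IH"(1) sub by blast
      with fs show ?thesis by auto
    qed
  qed
qed

lemma set_concat_zero_blocks:
  "set (concat (map2 (\<lambda>m e. replicate (m - 1) (0::'a::zero) @ [e]) ms es)) \<subseteq> insert 0 (set es)"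
  by (induction ms es rule: list_induct2') auto

lemma zero_in_concat_zero_blocks:
  assumes "(m, e) \<in> set (zip ms es)" "m \<ge> 2"
  shows "(0::'a::zero) \<in> set (concat (map2 (\<lambda>m e. replicate (m - 1) 0 @ [e]) ms es))"
  using assms by (induction ms es rule: list_induct2') auto

theorem mainTheorem7:
  fixes ms :: "nat list" and es :: "rat list"
  assumes "length ms = length es"
    and "length ms \<ge> 1"
    and "\<forall>m\<in>set ms. m \<ge> 1"
    and "\<exists>m\<in>set ms. m \<noteq> 1"
    and "\<forall>e\<in>set es. e = 1 \<or> e = -1"
  shows "tval (Sf (concat (map2 (\<lambda>m e. replicate (m - 1) 0 @ [e]) ms es) @ [1])) = (\<lambda>_. 0)"
proof -
  let ?word = "concat (map2 (\<lambda>m e. replicate (m - 1) 0 @ [e]) ms es) @ [1 :: rat]"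
  have trivial_entries: "set ?word \<subseteq> {0, 1, -1}"
    using set_concat_zero_blocks[of ms es] assms(5) by auto
  obtain m where m: "m \<in> set ms" "m \<ge> 2"
    using assms(3,4) by fastforce
  then obtain e where "(m, e) \<in> set (zip ms es)"
    using in_set_impl_in_set_zip1[OF assms(1)] by blast
  then have zero_entry: "0 \<in> set ?word"
    using zero_in_concat_zero_blocks m(2) by fastforce
  show ?thesis
    by (rule tval_eq_0_if_trivial_factors) (rule Sf_has_trivial_factor[OF trivial_entries zero_entry])
qed

end
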